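(* Let $M$ be a pointed metric space which is uniformly discrete and unbounded, and let $X$ be a non-zero Banach space. Then the norm of $\mathcal F(M)\widehat{\otimes}_\pi X$ is octahedral.
   Context: All Banach spaces are real. $\mathcal F(M)$ is the Lipschitz-free space over $M$ (closed linear span of evaluation functionals $\delta_p$ in the dual of the space $\mathrm{Lip}_0(M)$ of real Lipschitz functions vanishing at the base point), $\widehat{\otimes}_\pi$ is the projective tensor product. $M$ is uniformly discrete if $\inf\{d(x,y):x\neq y\}>0$. A Banach space $Z$ is octahedral if for every $x_1,\dots,x_n\in S_Z$ and $\varepsilon>0$ there is $y\in S_Z$ with $\|x_i-y\|\ge 2-\varepsilon$ for all $i$. *)

theory Defs
  imports "HOL-Analysis.Analysis" "HOL-Library.Function_Algebras"
begin

definition uniformly_discrete :: "'m::metric_space set \<Rightarrow> bool" where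
  "uniformly_discrete M \<longleftrightarrow> (\<exists>e>0. \<forall>x\<in>M. \<forall>y\<in>M. x \<noteq> y \<longrightarrow> e \<le> dist x y)"

text \<open>Unit ball of Lip_0(M): real 1-Lipschitz functions vanishing at the base point.\<close>
definition lip1_0 :: "'m::metric_space \<Rightarrow> ('m \<Rightarrow> real) \<Rightarrow> bool" where
  "lip1_0 z f \<longleftrightarrow> f z = 0 \<and> (\<forall>x y. \<bar>f x - f y\<bar> \<le> dist x y)"

definition fin_supp :: "('m \<Rightarrow> 'a::zero) \<Rightarrow> bool" where
  "fin_supp a \<longleftrightarrow> finite {p. a p \<noteq> 0}"

text \<open>A finitely supported a represents the element sum_p a p * delta_p of span{delta_p}
  inside Lip_0(M)^*; its norm is the dual norm.\<close>
definition free_norm :: "'m::metric_space \<Rightarrow> ('m \<Rightarrow> real) \<Rightarrow> real" where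
  "free_norm z a = (SUP f \<in> Collect (lip1_0 z). \<bar>\<Sum>p\<in>{p. a p \<noteq> 0}. a p * f p\<bar>)"

text \<open>The algebraic tensor product span{delta_p} (x) X: the element sum_p delta_p (x) u p
  is encoded by a finitely supported u : M => X with u z = 0 (as delta_z = 0).\<close>
definition tensor_space :: "'m \<Rightarrow> ('m \<Rightarrow> 'x::real_normed_vector) set" where
  "tensor_space z = {u. fin_supp u \<and> u z = 0}"

text \<open>Projective norm: infimum of sum_i ||m_i||_F ||x_i|| over all representations
  u = sum_i m_i (x) x_i with m_i in span{delta_p}.\<close>
definition represents :: "'m \<Rightarrow> ('m \<Rightarrow> 'x::real_normed_vector) \<Rightarrow> (('m \<Rightarrow> real) \<times> 'x) list \<Rightarrow> bool" where
  "represents z u rs \<longleftrightarrow> (\<forall>(a, x)\<in>set rs. fin_supp a) \<and>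
      (\<forall>p. p \<noteq> z \<longrightarrow> u p = (\<Sum>(a, x)\<leftarrow>rs. a p *\<^sub>R x))"

definition proj_norm :: "'m::metric_space \<Rightarrow> ('m \<Rightarrow> 'x::real_normed_vector) \<Rightarrow> real" where
  "proj_norm z u = (INF rs \<in> Collect (represents z u). (\<Sum>(a, x)\<leftarrow>rs. free_norm z a * norm x))"

definition octahedral :: "'v::ab_group_add set \<Rightarrow> ('v \<Rightarrow> real) \<Rightarrow> bool" where
  "octahedral V N \<longleftrightarrow> (\<forall>F e. finite F \<and> F \<subseteq> {x\<in>V. N x = 1} \<and> e > 0 \<longrightarrow>
      (\<exists>y\<in>V. N y = 1 \<and> (\<forall>x\<in>F. N (x - y) \<ge> 2 - e)))"

end

theory Submission
  imports Defs
begin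

(* Given finitely many norm-one u, all supported in a ball B(z, r), take y = (\<delta>_q / d(q, z)) \<otimes> x
   with \<parallel>x\<parallel> = 1 and q very far from z.  Let t be a cutoff equal to 1 on B(z, r) and 0 at q, and
   h = (1 - t) d(-, z).  For w = u - y, multiplying the coefficients of w by t recovers u, while
   pairing them with h gives -x.  If f is 1-Lipschitz then t f + h and t f - h are
   (1 + 2d)-Lipschitz, so on every representation of w the two operations together cost at most a
   factor 1 + 2d.  Hence \<parallel>u\<parallel> + \<parallel>x\<parallel> \<le> (1 + 2d) \<parallel>u - y\<parallel>, which gives \<parallel>u - y\<parallel> \<ge> 2 - e for d = e/4. *)

lemma lip1_0_abs_le_dist: "lip1_0 z f \<Longrightarrow> \<bar>f p\<bar> \<le> dist p z"
  unfolding lip1_0_def by (metis diff_zero)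

lemma lip1_0_zero: "lip1_0 z (\<lambda>_. 0)"
  unfolding lip1_0_def by simp

lemma bdd_above_free_norm:
  assumes "fin_supp a"
  shows "bdd_above ((\<lambda>f. \<bar>\<Sum>p\<in>{p. a p \<noteq> 0}. a p * f p\<bar>) ` Collect (lip1_0 z))"
proof (rule bdd_aboveI2)
  fix f assume "f \<in> Collect (lip1_0 z)"
  then have f: "lip1_0 z f" by simp
  have "\<bar>\<Sum>p\<in>{p. a p \<noteq> 0}. a p * f p\<bar> \<le> (\<Sum>p\<in>{p. a p \<noteq> 0}. \<bar>a p * f p\<bar>)"
    by (rule sum_abs)
  also have "\<dots> \<le> (\<Sum>p\<in>{p. a p \<noteq> 0}. \<bar>a p\<bar> * dist p z)"
    by (rule sum_mono) (simp add: abs_mult lip1_0_abs_le_dist[OF f] mult_left_mono)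
  finally show "\<bar>\<Sum>p\<in>{p. a p \<noteq> 0}. a p * f p\<bar> \<le> (\<Sum>p\<in>{p. a p \<noteq> 0}. \<bar>a p\<bar> * dist p z)" .
qed

lemma abs_pairing_le_free_norm:
  assumes "fin_supp a" "L > 0" "g z = 0" "\<And>p p'. \<bar>g p - g p'\<bar> \<le> L * dist p p'"
  shows "\<bar>\<Sum>p\<in>{p. a p \<noteq> 0}. a p * g p\<bar> \<le> L * free_norm z a"
proof -
  have "lip1_0 z (\<lambda>p. g p / L)"
    unfolding lip1_0_def using assms(2-4)
    by (auto simp: diff_divide_distrib[symmetric] pos_divide_le_eq mult.commute)
  then have "\<bar>\<Sum>p\<in>{p. a p \<noteq> 0}. a p * (g p / L)\<bar> \<le> free_norm z a"
    unfolding free_norm_def by (intro cSUP_upper[OF _ bdd_above_free_norm[OF assms(1)]]) simp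
  with \<open>L > 0\<close> show ?thesis
    by (simp add: sum_divide_distrib[symmetric] pos_divide_le_eq mult.commute)
qed

lemma free_norm_nonneg: "fin_supp a \<Longrightarrow> 0 \<le> free_norm z a"
  using abs_pairing_le_free_norm[of a 1 "\<lambda>_. 0" z] by simp

lemma free_norm_delta_le: "free_norm z (\<lambda>p. if p = q then 1 else 0) \<le> dist q z"
proof -
  have "{p. (if p = q then 1 else 0::real) \<noteq> 0} = {q}" by auto
  then show ?thesis unfolding free_norm_def
    by (intro cSUP_least) (auto intro: lip1_0_zero lip1_0_abs_le_dist)
qed

lemma represents_fin_supp: "represents z w rs \<Longrightarrow> (a, x) \<in> set rs \<Longrightarrow> fin_supp a"
  unfolding represents_def by auto

lemma proj_norm_le_representation:
  assumes "represents z w rs"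
  shows "proj_norm z w \<le> (\<Sum>(a, x)\<leftarrow>rs. free_norm z a * norm x)"
  unfolding proj_norm_def
proof (rule cINF_lower)
  show "bdd_below ((\<lambda>rs. \<Sum>(a, x)\<leftarrow>rs. free_norm z a * norm x) ` Collect (represents z w))"
    by (rule bdd_belowI2[where m = 0], rule sum_list_nonneg)
      (auto intro!: mult_nonneg_nonneg free_norm_nonneg dest: represents_fin_supp)
qed (use assms in simp)

lemma represents_exists:
  assumes "fin_supp w"
  shows "\<exists>rs. represents z w rs"
proof -
  obtain ps where ps: "set ps = {p. w p \<noteq> 0}" "distinct ps"
    using finite_distinct_list assms unfolding fin_supp_def by blast
  define rs where "rs = map (\<lambda>q. ((\<lambda>p. if p = q then 1 else 0::real), w q)) ps"
  have "w p = (\<Sum>(a, x)\<leftarrow>rs. a p *\<^sub>R x)" for p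
  proof -
    have "(\<Sum>(a, x)\<leftarrow>rs. a p *\<^sub>R x) = (\<Sum>q\<in>{p. w p \<noteq> 0}. (if p = q then 1 else 0::real) *\<^sub>R w q)"
      using ps by (simp add: rs_def o_def sum_list_distinct_conv_sum_set)
    also have "\<dots> = (\<Sum>q\<in>{p. w p \<noteq> 0}. if p = q then w q else 0)"
      by (rule sum.cong) auto
    also have "\<dots> = w p"
      using assms by (simp add: fin_supp_def)
    finally show ?thesis by simp
  qed
  moreover have "fin_supp a" if "(a, x) \<in> set rs" for a x
    using that by (auto simp: rs_def fin_supp_def)
  ultimately have "represents z w rs"
    unfolding represents_def by auto
  then show ?thesis by blast
qed

lemma proj_norm_greatest:
  assumes "fin_supp w"
    and "\<And>rs. represents z w rs \<Longrightarrow> c \<le> (\<Sum>(a, x)\<leftarrow>rs. free_norm z a * norm x)"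
  shows "c \<le> proj_norm z w"
  unfolding proj_norm_def using assms represents_exists by (intro cINF_greatest) auto

lemma sum_scaleR_sum_list_swap:
  fixes g :: "'m \<Rightarrow> real" and rs :: "(('m \<Rightarrow> real) \<times> 'x::real_vector) list"
  shows "(\<Sum>p\<in>U. g p *\<^sub>R (\<Sum>(a, x)\<leftarrow>rs. a p *\<^sub>R x)) = (\<Sum>(a, x)\<leftarrow>rs. (\<Sum>p\<in>U. a p * g p) *\<^sub>R x)"
  by (induction rs) (auto simp: scaleR_right_distrib sum.distrib scaleR_sum_left mult.commute)

lemma represents_pairing:
  assumes rep: "represents z w rs" and fw: "fin_supp w" and "g z = 0"
  shows "(\<Sum>p\<in>{p. w p \<noteq> 0}. g p *\<^sub>R w p) = (\<Sum>(a, x)\<leftarrow>rs. (\<Sum>p\<in>{p. a p \<noteq> 0}. a p * g p) *\<^sub>R x)"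
proof -
  define U where "U = {p. w p \<noteq> 0} \<union> (\<Union>(a, x)\<in>set rs. {p. a p \<noteq> 0})"
  have "finite U"
    using fw represents_fin_supp[OF rep] by (auto simp: U_def fin_supp_def)
  have "(\<Sum>p\<in>{p. w p \<noteq> 0}. g p *\<^sub>R w p) = (\<Sum>p\<in>U. g p *\<^sub>R w p)"
    using \<open>finite U\<close> by (intro sum.mono_neutral_left) (auto simp: U_def)
  also have "\<dots> = (\<Sum>p\<in>U. g p *\<^sub>R (\<Sum>(a, x)\<leftarrow>rs. a p *\<^sub>R x))"
    using rep \<open>g z = 0\<close> by (intro sum.cong) (auto simp: represents_def)
  also have "\<dots> = (\<Sum>(a, x)\<leftarrow>rs. (\<Sum>p\<in>U. a p * g p) *\<^sub>R x)"
    by (rule sum_scaleR_sum_list_swap)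
  also have "\<dots> = (\<Sum>(a, x)\<leftarrow>rs. (\<Sum>p\<in>{p. a p \<noteq> 0}. a p * g p) *\<^sub>R x)"
  proof (intro arg_cong[where f = sum_list] map_cong refl, clarify)
    fix a x assume "(a, x) \<in> set rs"
    then have "(\<Sum>p\<in>U. a p * g p) = (\<Sum>p\<in>{p. a p \<noteq> 0}. a p * g p)"
      using \<open>finite U\<close> by (intro sum.mono_neutral_right) (auto simp: U_def)
    then show "(\<Sum>p\<in>U. a p * g p) *\<^sub>R x = (\<Sum>p\<in>{p. a p \<noteq> 0}. a p * g p) *\<^sub>R x" by simp
  qed
  finally show ?thesis .
qed

lemma norm_sum_list_scaleR_le:
  fixes rs :: "('a \<times> 'x::real_normed_vector) list"
  shows "norm (\<Sum>(a, x)\<leftarrow>rs. c a *\<^sub>R x) \<le> (\<Sum>(a, x)\<leftarrow>rs. \<bar>c a\<bar> * norm x)"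
  by (induction rs) (auto intro!: norm_triangle_le)

text \<open>The logarithmic decay, s |t'(s)| \<le> d, is what keeps t f \<plusminus> (1 - t) d(-, z)
  (1 + 2d)-Lipschitz; a linear cutoff would not make s |t'(s)| small.\<close>
definition log_cutoff :: "real \<Rightarrow> real \<Rightarrow> real \<Rightarrow> real" where
  "log_cutoff d r s = max 0 (1 - d * ln (max s r / r))"

lemma log_cutoff_nonneg: "0 \<le> log_cutoff d r s"
  unfolding log_cutoff_def by simp

lemma log_cutoff_le_one: "0 \<le> d \<Longrightarrow> 0 < r \<Longrightarrow> log_cutoff d r s \<le> 1"
  unfolding log_cutoff_def by auto

lemma log_cutoff_eq_one: "0 < r \<Longrightarrow> s \<le> r \<Longrightarrow> log_cutoff d r s = 1"
  unfolding log_cutoff_def by simp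

lemma log_cutoff_eq_zero:
  assumes "0 < d" "0 < r" "r * exp (1 / d) \<le> s"
  shows "log_cutoff d r s = 0"
proof -
  have "r < r * exp (1 / d)"
    using assms by simp
  with assms have "r < s" by linarith
  then have "max s r = s" by simp
  have "1 / d \<le> ln (s / r)"
    using assms \<open>r < s\<close> by (subst ln_ge_iff) (auto simp: pos_le_divide_eq mult.commute)
  then have "1 \<le> d * ln (s / r)"
    using \<open>0 < d\<close> by (simp add: divide_simps mult.commute)
  then show ?thesis
    unfolding log_cutoff_def \<open>max s r = s\<close> by simp
qed

lemma log_cutoff_antimono: "0 \<le> d \<Longrightarrow> 0 < r \<Longrightarrow> a \<le> b \<Longrightarrow> log_cutoff d r b \<le> log_cutoff d r a"
  unfolding log_cutoff_def
  by (intro max.mono diff_left_mono mult_left_mono ln_mono divide_right_mono) auto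

lemma log_cutoff_decay:
  assumes "0 \<le> d" "0 < r" "0 \<le> a" "a \<le> b"
  shows "a * (log_cutoff d r a - log_cutoff d r b) \<le> d * (b - a)"
proof -
  define A B where "A = max a r" and "B = max b r"
  have AB: "0 < A" "A \<le> B" "a \<le> A" "B - A \<le> b - a"
    using assms by (auto simp: A_def B_def)
  have "d * ln (A / r) \<le> d * ln (B / r)"
    using AB assms by (intro mult_left_mono ln_mono divide_right_mono) auto
  then have "log_cutoff d r a - log_cutoff d r b \<le> d * (ln (B / r) - ln (A / r))"
    unfolding log_cutoff_def A_def[symmetric] B_def[symmetric] by (auto simp: algebra_simps)
  also have "ln (B / r) - ln (A / r) = ln (B / A)"
    using AB \<open>0 < r\<close> by (simp add: ln_div)
  also have "\<dots> \<le> (B - A) / A"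
    using AB ln_le_minus_one[of "B / A"] by (simp add: diff_divide_distrib)
  finally have "a * (log_cutoff d r a - log_cutoff d r b) \<le> a * (d * ((B - A) / A))"
    using \<open>0 \<le> a\<close> \<open>0 \<le> d\<close> by (intro mult_left_mono) (auto intro: order_trans mult_left_mono)
  also have "\<dots> \<le> A * (d * ((B - A) / A))"
    using AB \<open>0 \<le> d\<close> by (intro mult_right_mono) auto
  also have "\<dots> = d * (B - A)"
    using AB by simp
  also have "\<dots> \<le> d * (b - a)"
    using AB \<open>0 \<le> d\<close> by (simp add: mult_left_mono)
  finally show ?thesis .
qed

lemma abs_dist_diff_dist_le: "\<bar>dist p z - dist p' z\<bar> \<le> dist p p'"
  by (metis abs_dist_diff_le dist_commute)

lemma abs_cutoff_combination_diff_le: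
  fixes t t' f f' \<rho> \<rho>' D d \<sigma> :: real
  assumes t: "0 \<le> t" "t \<le> t'" "t' \<le> 1"
    and "\<bar>f - f'\<bar> \<le> D" "\<bar>f'\<bar> \<le> \<rho>'" "\<bar>\<rho> - \<rho>'\<bar> \<le> D" "0 \<le> \<rho>'"
    and decay: "\<rho>' * (t' - t) \<le> d * D" and "\<bar>\<sigma>\<bar> \<le> 1"
  shows "\<bar>(t * f + \<sigma> * ((1 - t) * \<rho>)) - (t' * f' + \<sigma> * ((1 - t') * \<rho>'))\<bar> \<le> (1 + 2 * d) * D"
proof -
  have "\<bar>t * f - t' * f'\<bar> = \<bar>t * (f - f') - (t' - t) * f'\<bar>"
    by (simp add: algebra_simps)
  also have "\<dots> \<le> t * \<bar>f - f'\<bar> + (t' - t) * \<bar>f'\<bar>"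
    using t abs_triangle_ineq4[of "t * (f - f')" "(t' - t) * f'"] by (simp add: abs_mult)
  also have "\<dots> \<le> t * D + (t' - t) * \<rho>'"
    using assms by (intro add_mono mult_left_mono) auto
  finally have f_part: "\<bar>t * f - t' * f'\<bar> \<le> t * D + \<rho>' * (t' - t)"
    by (simp add: mult.commute)
  have "\<bar>(1 - t) * \<rho> - (1 - t') * \<rho>'\<bar> = \<bar>(1 - t) * (\<rho> - \<rho>') + (t' - t) * \<rho>'\<bar>"
    by (simp add: algebra_simps)
  also have "\<dots> \<le> (1 - t) * \<bar>\<rho> - \<rho>'\<bar> + (t' - t) * \<rho>'"
    using assms abs_triangle_ineq[of "(1 - t) * (\<rho> - \<rho>')" "(t' - t) * \<rho>'"] by (simp add: abs_mult)
  also have "\<dots> \<le> (1 - t) * D + (t' - t) * \<rho>'"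
    using assms by (simp add: mult_left_mono)
  finally have h_part: "\<bar>(1 - t) * \<rho> - (1 - t') * \<rho>'\<bar> \<le> (1 - t) * D + \<rho>' * (t' - t)"
    by (simp add: mult.commute)
  have "\<bar>\<sigma> * ((1 - t) * \<rho> - (1 - t') * \<rho>')\<bar> \<le> \<bar>(1 - t) * \<rho> - (1 - t') * \<rho>'\<bar>"
    using \<open>\<bar>\<sigma>\<bar> \<le> 1\<close> by (simp add: abs_mult mult_left_le_one_le)
  moreover have "\<bar>(t * f + \<sigma> * ((1 - t) * \<rho>)) - (t' * f' + \<sigma> * ((1 - t') * \<rho>'))\<bar>
      \<le> \<bar>t * f - t' * f'\<bar> + \<bar>\<sigma> * ((1 - t) * \<rho> - (1 - t') * \<rho>')\<bar>"
    using abs_triangle_ineq[of "t * f - t' * f'" "\<sigma> * ((1 - t) * \<rho> - (1 - t') * \<rho>')"]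
    by (simp add: algebra_simps)
  ultimately have "\<bar>(t * f + \<sigma> * ((1 - t) * \<rho>)) - (t' * f' + \<sigma> * ((1 - t') * \<rho>'))\<bar>
      \<le> D + 2 * (\<rho>' * (t' - t))"
    using f_part h_part by (simp add: algebra_simps)
  also have "\<dots> \<le> (1 + 2 * d) * D"
    using decay by (simp add: algebra_simps)
  finally show ?thesis .
qed

lemma lipschitz_cutoff_combination:
  fixes z :: "'m::metric_space" and d r :: real
  defines "t p \<equiv> log_cutoff d r (dist p z)"
  assumes "0 \<le> d" "0 < r" "lip1_0 z f" "\<bar>\<sigma>\<bar> \<le> 1"
  shows "\<bar>(t p * f p + \<sigma> * ((1 - t p) * dist p z)) - (t p' * f p' + \<sigma> * ((1 - t p') * dist p' z))\<bar>
    \<le> (1 + 2 * d) * dist p p'"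
proof -
  have ordered: "\<bar>(t p * f p + \<sigma> * ((1 - t p) * dist p z)) - (t p' * f p' + \<sigma> * ((1 - t p') * dist p' z))\<bar>
    \<le> (1 + 2 * d) * dist p p'" if "dist p' z \<le> dist p z" for p p'
  proof (rule abs_cutoff_combination_diff_le)
    show "0 \<le> t p" "t p \<le> t p'" "t p' \<le> 1"
      using assms that by (auto simp: t_def log_cutoff_nonneg log_cutoff_le_one log_cutoff_antimono)
    show "\<bar>f p - f p'\<bar> \<le> dist p p'" "\<bar>f p'\<bar> \<le> dist p' z"
      using \<open>lip1_0 z f\<close> lip1_0_abs_le_dist by (auto simp: lip1_0_def)
    have "dist p' z * (t p' - t p) \<le> d * (dist p z - dist p' z)"
      using log_cutoff_decay[OF \<open>0 \<le> d\<close> \<open>0 < r\<close> zero_le_dist that] by (simp add: t_def)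
    also have "\<dots> \<le> d * dist p p'"
      using abs_dist_diff_dist_le[of p z p'] \<open>0 \<le> d\<close> by (intro mult_left_mono) auto
    finally show "dist p' z * (t p' - t p) \<le> d * dist p p'" .
  qed (use abs_dist_diff_dist_le \<open>\<bar>\<sigma>\<bar> \<le> 1\<close> in auto)
  show ?thesis
  proof (cases "dist p' z \<le> dist p z")
    case True
    then show ?thesis by (rule ordered)
  next
    case False
    then have "dist p z \<le> dist p' z" by simp
    from ordered[OF this] show ?thesis
      by (simp add: abs_minus_commute dist_commute)
  qed
qed

lemma free_norm_cutoff_add_abs_pairing_le:
  fixes z :: "'m::metric_space" and d r :: real
  defines "t p \<equiv> log_cutoff d r (dist p z)"
  assumes "0 \<le> d" "0 < r" "fin_supp a"
  shows "free_norm z (\<lambda>p. t p * a p) + \<bar>\<Sum>p\<in>{p. a p \<noteq> 0}. a p * ((1 - t p) * dist p z)\<bar>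
    \<le> (1 + 2 * d) * free_norm z a"
proof -
  define h where "h p = (1 - t p) * dist p z" for p
  define pairing_h where "pairing_h = (\<Sum>p\<in>{p. a p \<noteq> 0}. a p * h p)"
  have "free_norm z (\<lambda>p. t p * a p) \<le> (1 + 2 * d) * free_norm z a - \<bar>pairing_h\<bar>"
    unfolding free_norm_def[of z "\<lambda>p. t p * a p"]
  proof (rule cSUP_least)
    show "Collect (lip1_0 z) \<noteq> {}" using lip1_0_zero by blast
  next
    fix f assume "f \<in> Collect (lip1_0 z)"
    then have f: "lip1_0 z f" by simp
    define pairing_tf where "pairing_tf = (\<Sum>p\<in>{p. a p \<noteq> 0}. a p * (t p * f p))"
    have "(\<Sum>p\<in>{p. t p * a p \<noteq> 0}. t p * a p * f p) = pairing_tf"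
      unfolding pairing_tf_def using \<open>fin_supp a\<close>
      by (intro sum.mono_neutral_cong_left) (auto simp: fin_supp_def)
    moreover have "\<bar>pairing_tf + \<sigma> * pairing_h\<bar> \<le> (1 + 2 * d) * free_norm z a" if "\<bar>\<sigma>\<bar> \<le> 1" for \<sigma>
    proof -
      have "\<bar>\<Sum>p\<in>{p. a p \<noteq> 0}. a p * (t p * f p + \<sigma> * h p)\<bar> \<le> (1 + 2 * d) * free_norm z a"
      proof (rule abs_pairing_le_free_norm[OF \<open>fin_supp a\<close>])
        show "t z * f z + \<sigma> * h z = 0"
          using f by (simp add: lip1_0_def h_def)
        show "\<bar>t p * f p + \<sigma> * h p - (t p' * f p' + \<sigma> * h p')\<bar> \<le> (1 + 2 * d) * dist p p'" for p p'
          using lipschitz_cutoff_combination[OF \<open>0 \<le> d\<close> \<open>0 < r\<close> f that] by (simp add: t_def h_def)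
      qed (use \<open>0 \<le> d\<close> in simp)
      then show ?thesis
        by (simp add: pairing_tf_def pairing_h_def sum.distrib sum_distrib_left algebra_simps)
    qed
    from this[of 1] this[of "-1"]
    show "\<bar>\<Sum>p\<in>{p. t p * a p \<noteq> 0}. t p * a p * f p\<bar> \<le> (1 + 2 * d) * free_norm z a - \<bar>pairing_h\<bar>"
      unfolding \<open>(\<Sum>p\<in>{p. t p * a p \<noteq> 0}. t p * a p * f p) = pairing_tf\<close> by linarith
  qed
  then show ?thesis
    by (simp add: pairing_h_def h_def)
qed

lemma represents_scale:
  assumes "represents z w rs"
  shows "represents z (\<lambda>p. c p *\<^sub>R w p) (map (\<lambda>(a, x). (\<lambda>p. c p * a p, x)) rs)"
  unfolding represents_def
proof safe
  fix b x assume "(b, x) \<in> set (map (\<lambda>(a, x). (\<lambda>p. c p * a p, x)) rs)"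
  then obtain a where "(a, x) \<in> set rs" "b = (\<lambda>p. c p * a p)" by auto
  then show "fin_supp b"
    using represents_fin_supp[OF assms] unfolding fin_supp_def by (auto elim: rev_finite_subset)
next
  fix p assume "p \<noteq> z"
  then have "c p *\<^sub>R w p = c p *\<^sub>R (\<Sum>(a, x)\<leftarrow>rs. a p *\<^sub>R x)"
    using assms by (simp add: represents_def)
  also have "\<dots> = (\<Sum>(b, x)\<leftarrow>map (\<lambda>(a, x). (\<lambda>p. c p * a p, x)) rs. b p *\<^sub>R x)"
    by (induction rs) (auto simp: scaleR_right_distrib)
  finally show "c p *\<^sub>R w p = (\<Sum>(b, x)\<leftarrow>map (\<lambda>(a, x). (\<lambda>p. c p * a p, x)) rs. b p *\<^sub>R x)" .
qed

lemma proj_norm_cutoff_add_norm_pairing_le: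
  fixes z :: "'m::metric_space" and d r :: real and w :: "'m \<Rightarrow> 'x::real_normed_vector"
  defines "t p \<equiv> log_cutoff d r (dist p z)"
  assumes "0 \<le> d" "0 < r" "fin_supp w"
  shows "proj_norm z (\<lambda>p. t p *\<^sub>R w p) + norm (\<Sum>p\<in>{p. w p \<noteq> 0}. ((1 - t p) * dist p z) *\<^sub>R w p)
    \<le> (1 + 2 * d) * proj_norm z w"
proof -
  define h where "h p = (1 - t p) * dist p z" for p
  have "h z = 0" by (simp add: h_def)
  define lhs where "lhs = proj_norm z (\<lambda>p. t p *\<^sub>R w p) + norm (\<Sum>p\<in>{p. w p \<noteq> 0}. h p *\<^sub>R w p)"
  have "lhs / (1 + 2 * d) \<le> proj_norm z w"
  proof (rule proj_norm_greatest[OF \<open>fin_supp w\<close>])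
    fix rs assume rep: "represents z w rs"
    have "proj_norm z (\<lambda>p. t p *\<^sub>R w p) \<le> (\<Sum>(a, x)\<leftarrow>rs. free_norm z (\<lambda>p. t p * a p) * norm x)"
      using proj_norm_le_representation[OF represents_scale[OF rep, of t]] by (simp add: o_def split_def)
    moreover have "norm (\<Sum>p\<in>{p. w p \<noteq> 0}. h p *\<^sub>R w p)
        \<le> (\<Sum>(a, x)\<leftarrow>rs. \<bar>\<Sum>p\<in>{p. a p \<noteq> 0}. a p * h p\<bar> * norm x)"
      unfolding represents_pairing[OF rep \<open>fin_supp w\<close>, of h, OF \<open>h z = 0\<close>]
      by (rule norm_sum_list_scaleR_le)
    moreover have "(\<Sum>(a, x)\<leftarrow>rs. free_norm z (\<lambda>p. t p * a p) * norm x)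
        + (\<Sum>(a, x)\<leftarrow>rs. \<bar>\<Sum>p\<in>{p. a p \<noteq> 0}. a p * h p\<bar> * norm x)
        \<le> (1 + 2 * d) * (\<Sum>(a, x)\<leftarrow>rs. free_norm z a * norm x)"
      unfolding sum_list_addf[symmetric] sum_list_const_mult[symmetric]
    proof (rule sum_list_mono, clarify)
      fix a x assume "(a, x) \<in> set rs"
      then have coefficient_bound:
        "free_norm z (\<lambda>p. t p * a p) + \<bar>\<Sum>p\<in>{p. a p \<noteq> 0}. a p * h p\<bar> \<le> (1 + 2 * d) * free_norm z a"
        using free_norm_cutoff_add_abs_pairing_le[OF \<open>0 \<le> d\<close> \<open>0 < r\<close> represents_fin_supp[OF rep]]
        by (simp add: t_def h_def)
      show "free_norm z (\<lambda>p. t p * a p) * norm x + \<bar>\<Sum>p\<in>{p. a p \<noteq> 0}. a p * h p\<bar> * norm x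
          \<le> (1 + 2 * d) * (free_norm z a * norm x)"
        using mult_right_mono[OF coefficient_bound norm_ge_zero[of x]] by (simp add: algebra_simps)
    qed
    ultimately have "lhs \<le> (1 + 2 * d) * (\<Sum>(a, x)\<leftarrow>rs. free_norm z a * norm x)"
      unfolding lhs_def by linarith
    then show "lhs / (1 + 2 * d) \<le> (\<Sum>(a, x)\<leftarrow>rs. free_norm z a * norm x)"
      using \<open>0 \<le> d\<close> by (simp add: divide_le_eq mult.commute)
  qed
  then show ?thesis
    using \<open>0 \<le> d\<close> by (simp add: lhs_def h_def divide_le_eq mult.commute)
qed

lemma tensor_space_diff: "u \<in> tensor_space z \<Longrightarrow> v \<in> tensor_space z \<Longrightarrow> u - v \<in> tensor_space z"
  unfolding tensor_space_def fin_supp_def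
  by (auto intro: finite_subset[of _ "{p. u p \<noteq> 0} \<union> {p. v p \<noteq> 0}"])

definition molecule_tensor :: "'m::metric_space \<Rightarrow> 'm \<Rightarrow> 'x::real_normed_vector \<Rightarrow> 'm \<Rightarrow> 'x" where
  "molecule_tensor z q x = (\<lambda>p. if p = q then (1 / dist q z) *\<^sub>R x else 0)"

lemma molecule_tensor_in_tensor_space: "q \<noteq> z \<Longrightarrow> molecule_tensor z q x \<in> tensor_space z"
  unfolding tensor_space_def fin_supp_def molecule_tensor_def
  by (auto elim: rev_finite_subset[of "{q}"])

lemma proj_norm_molecule_tensor:
  fixes z :: "'m::metric_space" and x :: "'x::real_normed_vector"
  assumes "q \<noteq> z"
  shows "proj_norm z (molecule_tensor z q x) = norm x"
proof -
  define y where "y = molecule_tensor z q x"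
  have "y \<in> tensor_space z"
    unfolding y_def by (rule molecule_tensor_in_tensor_space[OF assms])
  then have "fin_supp y"
    by (simp add: tensor_space_def)
  have "0 < dist q z"
    using assms by simp
  have "represents z y [((\<lambda>p. if p = q then 1 else 0), (1 / dist q z) *\<^sub>R x)]"
    unfolding represents_def y_def molecule_tensor_def fin_supp_def by auto
  then have "proj_norm z y \<le> free_norm z (\<lambda>p. if p = q then 1 else 0) * (norm x / dist q z)"
    using proj_norm_le_representation by fastforce
  also have "\<dots> \<le> dist q z * (norm x / dist q z)"
    by (intro mult_right_mono free_norm_delta_le) simp
  finally have "proj_norm z y \<le> norm x"
    using \<open>0 < dist q z\<close> by simp
  moreover have "norm x \<le> proj_norm z y"
  proof (rule proj_norm_greatest[OF \<open>fin_supp y\<close>])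
    fix rs assume rep: "represents z y rs"
    have "(\<Sum>p\<in>{p. y p \<noteq> 0}. dist p z *\<^sub>R y p) = x"
      using \<open>0 < dist q z\<close> by (cases "x = 0") (simp_all add: y_def molecule_tensor_def)
    then have "norm x = norm (\<Sum>(a, v)\<leftarrow>rs. (\<Sum>p\<in>{p. a p \<noteq> 0}. a p * dist p z) *\<^sub>R v)"
      using represents_pairing[OF rep \<open>fin_supp y\<close>, of "\<lambda>p. dist p z"] by simp
    also have "\<dots> \<le> (\<Sum>(a, v)\<leftarrow>rs. \<bar>\<Sum>p\<in>{p. a p \<noteq> 0}. a p * dist p z\<bar> * norm v)"
      by (rule norm_sum_list_scaleR_le)
    also have "\<dots> \<le> (\<Sum>(a, v)\<leftarrow>rs. free_norm z a * norm v)"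
    proof (rule sum_list_mono, clarify)
      fix a v assume "(a, v) \<in> set rs"
      then have "\<bar>\<Sum>p\<in>{p. a p \<noteq> 0}. a p * dist p z\<bar> \<le> 1 * free_norm z a"
        using represents_fin_supp[OF rep] abs_dist_diff_dist_le by (intro abs_pairing_le_free_norm) auto
      then show "\<bar>\<Sum>p\<in>{p. a p \<noteq> 0}. a p * dist p z\<bar> * norm v \<le> free_norm z a * norm v"
        by (simp add: mult_right_mono)
    qed
    finally show "norm x \<le> (\<Sum>(a, v)\<leftarrow>rs. free_norm z a * norm v)" .
  qed
  ultimately show ?thesis
    by (simp add: y_def)
qed

lemma proj_norm_add_le_proj_norm_diff_molecule_tensor:
  fixes z :: "'m::metric_space" and u :: "'m \<Rightarrow> 'x::real_normed_vector"
  assumes "0 < d" "0 < r" "u \<in> tensor_space z" "\<And>p. u p \<noteq> 0 \<Longrightarrow> dist p z \<le> r"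
    and "r * exp (1 / d) \<le> dist q z"
  shows "proj_norm z u + norm x \<le> (1 + 2 * d) * proj_norm z (u - molecule_tensor z q x)"
proof -
  define t where "t p = log_cutoff d r (dist p z)" for p
  define y where "y = molecule_tensor z q x"
  define w where "w = u - y"
  have "r < r * exp (1 / d)"
    using assms(1,2) by simp
  then have "r < dist q z"
    using assms(5) by linarith
  then have "q \<noteq> z" "u q = 0"
    using \<open>0 < r\<close> assms(4) by (auto, meson not_le)
  have "t q = 0"
    using log_cutoff_eq_zero[OF assms(1,2,5)] by (simp add: t_def)
  have t_supp_u: "t p = 1" if "u p \<noteq> 0" for p
    using log_cutoff_eq_one[OF \<open>0 < r\<close> assms(4)[OF that]] by (simp add: t_def)
  have "fin_supp w"
    using tensor_space_diff[OF assms(3) molecule_tensor_in_tensor_space[OF \<open>q \<noteq> z\<close>]]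
    by (simp add: w_def y_def tensor_space_def)
  have "proj_norm z (\<lambda>p. t p *\<^sub>R w p) + norm (\<Sum>p\<in>{p. w p \<noteq> 0}. ((1 - t p) * dist p z) *\<^sub>R w p)
      \<le> (1 + 2 * d) * proj_norm z w"
    unfolding t_def
    by (rule proj_norm_cutoff_add_norm_pairing_le[OF less_imp_le[OF \<open>0 < d\<close>] \<open>0 < r\<close> \<open>fin_supp w\<close>])
  moreover have "(\<lambda>p. t p *\<^sub>R w p) = u"
  proof
    fix p show "t p *\<^sub>R w p = u p"
      using \<open>t q = 0\<close> \<open>u q = 0\<close> t_supp_u
      by (cases "u p = 0") (auto simp: w_def y_def molecule_tensor_def)
  qed
  moreover have "(\<Sum>p\<in>{p. w p \<noteq> 0}. ((1 - t p) * dist p z) *\<^sub>R w p) = - x"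
  proof -
    have "(\<Sum>p\<in>{p. w p \<noteq> 0}. ((1 - t p) * dist p z) *\<^sub>R w p)
        = (\<Sum>p\<in>{p. w p \<noteq> 0}. if p = q then ((1 - t q) * dist q z) *\<^sub>R w q else 0)"
      using t_supp_u by (intro sum.cong) (auto simp: w_def y_def molecule_tensor_def)
    also have "\<dots> = ((1 - t q) * dist q z) *\<^sub>R w q"
      using \<open>fin_supp w\<close> by (simp add: fin_supp_def)
    also have "\<dots> = - x"
      using \<open>t q = 0\<close> \<open>u q = 0\<close> \<open>q \<noteq> z\<close> by (simp add: w_def y_def molecule_tensor_def)
    finally show ?thesis .
  qed
  ultimately show ?thesis
    by (simp add: w_def y_def)
qed

lemma two_sub_le_proj_norm_diff_molecule_tensor:
  fixes z :: "'m::metric_space" and u :: "'m \<Rightarrow> 'x::real_normed_vector"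
  assumes "0 < e" "0 < r" "u \<in> tensor_space z" "proj_norm z u = 1" "norm x = 1"
    and "\<And>p. u p \<noteq> 0 \<Longrightarrow> dist p z \<le> r" "r * exp (4 / e) \<le> dist q z"
  shows "2 - e \<le> proj_norm z (u - molecule_tensor z q x)"
proof -
  have "2 \<le> (1 + e / 2) * proj_norm z (u - molecule_tensor z q x)"
    using proj_norm_add_le_proj_norm_diff_molecule_tensor[of "e / 4" r u z q x] assms by simp
  moreover have "(1 + e / 2) * (2 - e) \<le> 2"
    by (simp add: algebra_simps)
  ultimately have "(1 + e / 2) * (2 - e) \<le> (1 + e / 2) * proj_norm z (u - molecule_tensor z q x)"
    by linarith
  then show ?thesis
    using \<open>0 < e\<close> by (simp add: mult_le_cancel_left_pos)
qed

lemma tensor_space_finite_supports_bounded: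
  fixes z :: "'m::metric_space"
  assumes "finite F" "F \<subseteq> tensor_space z"
  obtains r where "0 < r" "\<And>u p. u \<in> F \<Longrightarrow> u p \<noteq> 0 \<Longrightarrow> dist p z \<le> r"
proof -
  have "bounded (\<Union>u\<in>F. {p. u p \<noteq> 0})"
    using assms by (intro finite_imp_bounded) (auto simp: tensor_space_def fin_supp_def)
  then obtain b where "\<And>u p. u \<in> F \<Longrightarrow> u p \<noteq> 0 \<Longrightarrow> dist z p \<le> b"
    unfolding bounded_any_center[of _ z] by blast
  then show ?thesis
    by (metis that dist_commute max.cobounded1 max.strict_coboundedI2 order.trans zero_less_one)
qed

theorem theorem4p3:
  fixes z :: "'m::metric_space"
  assumes "uniformly_discrete (UNIV :: 'm set)"
    and "\<not> bounded (UNIV :: 'm set)"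
    and "\<exists>x::'x::banach. x \<noteq> 0"
  shows "octahedral (tensor_space z :: ('m \<Rightarrow> 'x) set) (proj_norm z)"
  unfolding octahedral_def
proof (intro allI impI)
  fix F :: "('m \<Rightarrow> 'x) set" and e :: real
  assume "finite F \<and> F \<subseteq> {u \<in> tensor_space z. proj_norm z u = 1} \<and> 0 < e"
  then have "finite F" "F \<subseteq> tensor_space z" "\<And>u. u \<in> F \<Longrightarrow> proj_norm z u = 1" "0 < e"
    by auto
  obtain r where "0 < r" and r: "\<And>u p. u \<in> F \<Longrightarrow> u p \<noteq> 0 \<Longrightarrow> dist p z \<le> r"
    using tensor_space_finite_supports_bounded[OF \<open>finite F\<close> \<open>F \<subseteq> tensor_space z\<close>] by blast
  have "\<not> (\<forall>q. dist z q \<le> r * exp (4 / e))"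
    using assms(2) unfolding bounded_any_center[of _ z] by blast
  then obtain q where q: "r * exp (4 / e) \<le> dist q z"
    by (auto simp: dist_commute not_le intro: less_imp_le)
  moreover have "0 < r * exp (4 / e)"
    using \<open>0 < r\<close> by simp
  ultimately have "q \<noteq> z"
    by auto
  obtain x :: 'x where "norm x = 1"
    using assms(3) by (metis norm_sgn)
  show "\<exists>y\<in>tensor_space z. proj_norm z y = 1 \<and> (\<forall>u\<in>F. 2 - e \<le> proj_norm z (u - y))"
  proof (intro bexI conjI ballI)
    show "molecule_tensor z q x \<in> tensor_space z" "proj_norm z (molecule_tensor z q x) = 1"
      using molecule_tensor_in_tensor_space[OF \<open>q \<noteq> z\<close>] proj_norm_molecule_tensor[OF \<open>q \<noteq> z\<close>, of x]
        \<open>norm x = 1\<close> by simp_all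
    show "2 - e \<le> proj_norm z (u - molecule_tensor z q x)" if "u \<in> F" for u
      using that \<open>F \<subseteq> tensor_space z\<close> \<open>\<And>u. u \<in> F \<Longrightarrow> proj_norm z u = 1\<close>
      by (intro two_sub_le_proj_norm_diff_molecule_tensor[OF \<open>0 < e\<close> \<open>0 < r\<close> _ _ \<open>norm x = 1\<close> r[OF that] q])
        auto
  qed
qed

end
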